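(* Let $n\ge 1$, let $a=(a_m)_{m\ge 0}$, $b=(b_m)_{m\ge0}$ be complex sequences with $b_0=0$ and $b_m\ne0$ for $m\ge1$, let $(p_m)_{m\ge0}$ be the monic polynomials with $p_{-1}=0$, $p_0=1$, $p_{m+1}(x)=(x-a_m)p_m(x)-b_mp_{m-1}(x)$ ($m\ge0$), and let $W:OY(\mathfrak{gl}_n,a,b)\to Y(\mathfrak{gl}_n)$ be the algebra isomorphism with $W(\tilde t^{(r)}_{ij})=t^{(r)}_{ij}+\sum_{l=0}^{r-1}p^r_lt^{(l)}_{ij}$, where $p_r(x)=\sum_{l=0}^rp^r_lx^l$. Define numbers $q^r_l$ ($0\le l\le r$, $q^r_r=1$) by $x^r=\sum_{l=0}^rq^r_l\,p_l(x)$ for all $r\ge0$. Then the inverse $W^{-1}:Y(\mathfrak{gl}_n)\to OY(\mathfrak{gl}_n,a,b)$ is given by $$t^{(r)}_{ij}\longmapsto \tilde t^{(r)}_{ij}+\sum_{l=0}^{r-1}q^r_l\,\tilde t^{(l)}_{ij},\qquad r\ge1,$$ and, on generating series, $W^{-1}(t_{ij}(u))=\frac{1}{2\pi i}\oint_{|z|=1}K^{-1}(z,\tfrac1u)\,\tilde T_{ij}(z)\frac{dz}{z}$ for $i,j=1,\dots,n$, with kernel $K^{-1}(z,u)=\sum_{l\ge0}u^l\sum_{m=0}^lq^l_mz^m$.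
   Context: $Y(\mathfrak{gl}_n)$ is the unital associative $\mathbb C$-algebra with generators $t^{(r)}_{ij}$ ($1\le i,j\le n$, $r\ge1$) and relations $[t^{(r+1)}_{ij},t^{(s)}_{kl}]-[t^{(r)}_{ij},t^{(s+1)}_{kl}]=t^{(r)}_{kj}t^{(s)}_{il}-t^{(s)}_{kj}t^{(r)}_{il}$ ($r,s\ge0$), $t^{(0)}_{ij}=\delta_{ij}$; $t_{ij}(u)=\sum_{r\ge0}t^{(r)}_{ij}u^{-r}$. $OY(\mathfrak{gl}_n,a,b)$ is the unital associative algebra with generators $\tilde t^{(r)}_{ij}$ ($r\ge1$) and relations $[\tilde t^{(r+1)}_{ij}+a_r\tilde t^{(r)}_{ij}+b_r\tilde t^{(r-1)}_{ij},\tilde t^{(s)}_{kl}]-[\tilde t^{(r)}_{ij},\tilde t^{(s+1)}_{kl}+a_s\tilde t^{(s)}_{kl}+b_s\tilde t^{(s-1)}_{kl}]=\tilde t^{(r)}_{kj}\tilde t^{(s)}_{il}-\tilde t^{(s)}_{kj}\tilde t^{(r)}_{il}$ ($r,s\ge0$), with $\tilde t^{(0)}_{ij}=\delta_{ij}$, $\tilde t^{(-1)}_{ij}=0$; $\tilde T_{ij}(u)=\delta_{ij}+\sum_{r\ge1}\tilde t^{(r)}_{ij}u^{-r}$. The contour integral $\frac{1}{2\pi i}\oint_{|z|=1}F(z)\frac{dz}{z}$ is understood formally as the coefficient of $z^0$ in $F(z)$, taken coefficientwise in $u^{-1}$. *)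

theory Defs
  imports "HOL-Computational_Algebra.Polynomial" "HOL-Library.Function_Algebras"
begin

text \<open>Generators: a triple (i,j,k) with i,j in the finite index type 'n (so n = CARD('n) \<ge> 1)
  and k :: nat stands for the generator with superscript r = k+1 (r \<ge> 1).
  An element of the free unital associative C-algebra on these generators is a finitely
  supported function from words (lists of generators) to complex numbers.\<close>

type_synonym 'n fa = "('n \<times> 'n \<times> nat) list \<Rightarrow> complex"

definition FA :: "'n fa set" where
  "FA = {f. finite {w. f w \<noteq> 0}}"

definition fa_one :: "'n fa" where
  "fa_one = (\<lambda>w. if w = [] then 1 else 0)"

definition fa_smult :: "complex \<Rightarrow> 'n fa \<Rightarrow> 'n fa" where
  "fa_smult c f = (\<lambda>w. c * f w)"

definition fa_mult :: "'n fa \<Rightarrow> 'n fa \<Rightarrow> 'n fa" where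
  "fa_mult f g = (\<lambda>w. \<Sum>k\<le>length w. f (take k w) * g (drop k w))"

definition fa_gen :: "'n \<times> 'n \<times> nat \<Rightarrow> 'n fa" where
  "fa_gen x = (\<lambda>w. if w = [x] then 1 else 0)"

definition fa_comm :: "'n fa \<Rightarrow> 'n fa \<Rightarrow> 'n fa" where
  "fa_comm x y = fa_mult x y - fa_mult y x"

definition gen :: "'n \<Rightarrow> 'n \<Rightarrow> nat \<Rightarrow> 'n fa" where
  "gen i j r = (if r = 0 then (if i = j then fa_one else 0) else fa_gen (i, j, r - 1))"

definition gen_pred :: "'n \<Rightarrow> 'n \<Rightarrow> nat \<Rightarrow> 'n fa" where
  "gen_pred i j r = (if r = 0 then 0 else gen i j (r - 1))"

text \<open>Unique unital algebra homomorphism out of the free algebra extending phi on generators.\<close>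
definition fa_ext :: "('n \<times> 'n \<times> nat \<Rightarrow> 'm fa) \<Rightarrow> 'n fa \<Rightarrow> 'm fa" where
  "fa_ext phi f = (\<Sum>w\<in>{w. f w \<noteq> 0}. fa_smult (f w) (foldr fa_mult (map phi w) fa_one))"

inductive_set fa_ideal :: "'n fa set \<Rightarrow> 'n fa set" for R where
  base: "x \<in> R \<Longrightarrow> x \<in> fa_ideal R"
| zero: "0 \<in> fa_ideal R"
| add: "x \<in> fa_ideal R \<Longrightarrow> y \<in> fa_ideal R \<Longrightarrow> x + y \<in> fa_ideal R"
| smult: "x \<in> fa_ideal R \<Longrightarrow> fa_smult c x \<in> fa_ideal R"
| lmult: "x \<in> fa_ideal R \<Longrightarrow> y \<in> FA \<Longrightarrow> fa_mult y x \<in> fa_ideal R"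
| rmult: "x \<in> fa_ideal R \<Longrightarrow> y \<in> FA \<Longrightarrow> fa_mult x y \<in> fa_ideal R"

text \<open>Equality in the quotient algebra (free algebra modulo the ideal generated by R).\<close>
definition fa_cong :: "'n fa set \<Rightarrow> 'n fa \<Rightarrow> 'n fa \<Rightarrow> bool" where
  "fa_cong R x y \<longleftrightarrow> x - y \<in> fa_ideal R"

definition yangian_rels :: "'n fa set" where
  "yangian_rels = {fa_comm (gen i j (r + 1)) (gen k l s) - fa_comm (gen i j r) (gen k l (s + 1))
      - (fa_mult (gen k j r) (gen i l s) - fa_mult (gen k j s) (gen i l r)) | i j k l r s. True}"

definition OY_rels :: "(nat \<Rightarrow> complex) \<Rightarrow> (nat \<Rightarrow> complex) \<Rightarrow> 'n fa set" where
  "OY_rels a b = {fa_comm (gen i j (r + 1) + fa_smult (a r) (gen i j r) + fa_smult (b r) (gen_pred i j r))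
                           (gen k l s)
      - fa_comm (gen i j r) (gen k l (s + 1) + fa_smult (a s) (gen k l s) + fa_smult (b s) (gen_pred k l s))
      - (fa_mult (gen k j r) (gen i l s) - fa_mult (gen k j s) (gen i l r)) | i j k l r s. True}"

fun opoly :: "(nat \<Rightarrow> complex) \<Rightarrow> (nat \<Rightarrow> complex) \<Rightarrow> nat \<Rightarrow> complex poly" where
  "opoly a b 0 = 1"
| "opoly a b (Suc 0) = [:- a 0, 1:]"
| "opoly a b (Suc (Suc m)) =
     [:- a (Suc m), 1:] * opoly a b (Suc m) - smult (b (Suc m)) (opoly a b m)"

definition W_gen :: "(nat \<Rightarrow> complex) \<Rightarrow> (nat \<Rightarrow> complex) \<Rightarrow> 'n \<times> 'n \<times> nat \<Rightarrow> 'n fa" where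
  "W_gen a b x = (case x of (i, j, k) \<Rightarrow>
      gen i j (k + 1) + (\<Sum>l<k + 1. fa_smult (coeff (opoly a b (k + 1)) l) (gen i j l)))"

definition W_map :: "(nat \<Rightarrow> complex) \<Rightarrow> (nat \<Rightarrow> complex) \<Rightarrow> 'n fa \<Rightarrow> 'n fa" where
  "W_map a b = fa_ext (W_gen a b)"

text \<open>Coefficients of K^{-1}(z, 1/u) = sum_l u^{-l} sum_{m\<le>l} q^l_m z^m:
  the coefficient of u^{-l} z^m.\<close>
definition Kinv_coeff :: "(nat \<Rightarrow> nat \<Rightarrow> complex) \<Rightarrow> nat \<Rightarrow> nat \<Rightarrow> complex" where
  "Kinv_coeff q l m = (if m \<le> l then q l m else 0)"

text \<open>Coefficient of u^{-l} of (1/2 pi i) \<ointegral> K(z,1/u) T(z) dz/z, taken formally as the coefficient of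
  z^0, where K(z,1/u) = sum_{l,m\<ge>0} K l m u^{-l} z^m (finitely many m for each l) and
  T(z) = sum_{s\<ge>0} T s z^{-s}: the z^0 coefficient pairs z^m with z^{-m}.\<close>
definition oint_coeff :: "(nat \<Rightarrow> nat \<Rightarrow> complex) \<Rightarrow> (nat \<Rightarrow> 'n fa) \<Rightarrow> nat \<Rightarrow> 'n fa" where
  "oint_coeff K T l = (\<Sum>m\<in>{m. K l m \<noteq> 0}. fa_smult (K l m) (T m))"

end

theory Submission
  imports Defs
begin

text \<open>For a polynomial P write t_ij[P] = sum_l (coeff P l) t_ij^(l), which is linear in P.
  Since p_r is monic of degree r, W sends t_ij^(r) = t_ij[x^r] to t_ij[p_r]. Hence, by linearity
  and x^r = sum_l q^r_l p_l, W maps sum_l q^r_l t_ij^(l) to t_ij[x^r] = t_ij^(r) already in the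
  free algebra; applying W^-1 gives the formula, and q^r_r = 1 separates the leading term. The
  contour integral is, coefficientwise, the same finite sum.\<close>

lemma degree_opoly_le: "degree (opoly a b n) \<le> n"
proof (induction a b n rule: opoly.induct)
  case (3 a b m)
  have "degree ([:- a (Suc m), 1:] * opoly a b (Suc m)) \<le> Suc (Suc m)"
    using degree_mult_le[of "[:- a (Suc m), 1:]" "opoly a b (Suc m)"] 3 by simp
  moreover have "degree (smult (b (Suc m)) (opoly a b m)) \<le> Suc (Suc m)"
    using 3 degree_smult_le[of "b (Suc m)" "opoly a b m"] by simp
  ultimately show ?case
    by (simp add: degree_diff_le)
qed simp_all

lemma coeff_opoly_self: "coeff (opoly a b n) n = 1"
proof (induction a b n rule: opoly.induct)
  case (3 a b m)
  have "coeff (opoly a b m) (Suc (Suc m)) = 0" "coeff (opoly a b (Suc m)) (Suc (Suc m)) = 0"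
    using degree_opoly_le[of a b m] degree_opoly_le[of a b "Suc m"] by (simp_all add: coeff_eq_0)
  with 3 show ?case
    by (simp add: mult_pCons_left)
qed simp_all

lemma monic_expansion_leading_coeff:
  fixes P :: "nat \<Rightarrow> 'a::comm_ring_1 poly"
  assumes "\<And>l. degree (P l) \<le> l" and "\<And>l. coeff (P l) l = 1"
    and "[:0, 1:] ^ r = (\<Sum>l\<le>r. smult (c l) (P l))"
  shows "c r = 1"
proof -
  have "[:0, 1:] ^ r = (monom 1 r :: 'a poly)"
    by (simp add: monom_altdef)
  then have "1 = coeff ([:0, 1:] ^ r :: 'a poly) r"
    by simp
  also have "\<dots> = (\<Sum>l\<le>r. c l * coeff (P l) r)"
    by (simp add: assms(3) coeff_sum)
  also have "\<dots> = (\<Sum>l\<le>r. if l = r then c r else 0)"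
  proof (intro sum.cong)
    fix l
    assume "l \<in> {..r}"
    then show "c l * coeff (P l) r = (if l = r then c r else 0)"
      using assms(1,2)[of l] by (auto simp: coeff_eq_0)
  qed simp
  finally show ?thesis
    by simp
qed

lemma sum_fun_apply: "(\<Sum>x\<in>A. f x) w = (\<Sum>x\<in>A. f x w)"
  by (induction A rule: infinite_finite_induct) simp_all

lemma fa_smult_0 [simp]: "fa_smult 0 f = 0"
  by (simp add: fa_smult_def fun_eq_iff)

lemma fa_smult_1 [simp]: "fa_smult 1 f = f"
  by (simp add: fa_smult_def fun_eq_iff)

lemma fa_smult_add_left: "fa_smult (c + d) f = fa_smult c f + fa_smult d f"
  by (simp add: fa_smult_def fun_eq_iff ring_distribs)

lemma fa_smult_assoc: "fa_smult c (fa_smult d f) = fa_smult (c * d) f"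
  by (simp add: fa_smult_def fun_eq_iff)

lemma fa_smult_sum_right: "fa_smult c (\<Sum>x\<in>A. f x) = (\<Sum>x\<in>A. fa_smult c (f x))"
  by (simp add: fun_eq_iff fa_smult_def sum_fun_apply sum_distrib_left)

lemma FA_zero [simp]: "0 \<in> FA"
  by (simp add: FA_def)

lemma FA_add: "f \<in> FA \<Longrightarrow> g \<in> FA \<Longrightarrow> f + g \<in> FA"
  unfolding FA_def by (auto intro: finite_subset[of _ "{w. f w \<noteq> 0} \<union> {w. g w \<noteq> 0}"])

lemma FA_smult: "f \<in> FA \<Longrightarrow> fa_smult c f \<in> FA"
  unfolding FA_def fa_smult_def by (auto intro: finite_subset[of _ "{w. f w \<noteq> 0}"])

lemma FA_sum: "(\<And>x. x \<in> A \<Longrightarrow> f x \<in> FA) \<Longrightarrow> (\<Sum>x\<in>A. f x) \<in> FA"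
  by (induction A rule: infinite_finite_induct) (simp_all add: FA_add)

lemma FA_gen: "gen i j r \<in> FA"
proof -
  have "fa_one \<in> FA" "fa_gen x \<in> FA" for x
    unfolding FA_def fa_one_def fa_gen_def
    by (auto intro: finite_subset[of _ "{[]}"] finite_subset[of _ "{[x]}"])
  then show ?thesis
    by (auto simp: gen_def)
qed

lemma fa_ext_conv_sum:
  assumes "finite S" and "{w. f w \<noteq> 0} \<subseteq> S"
  shows "fa_ext phi f = (\<Sum>w\<in>S. fa_smult (f w) (foldr fa_mult (map phi w) fa_one))"
  unfolding fa_ext_def by (rule sum.mono_neutral_left) (use assms in auto)

lemma fa_ext_zero: "fa_ext phi 0 = 0"
  by (simp add: fa_ext_def)

lemma fa_ext_add:
  assumes "f \<in> FA" and "g \<in> FA"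
  shows "fa_ext phi (f + g) = fa_ext phi f + fa_ext phi g"
proof -
  let ?S = "{w. f w \<noteq> 0} \<union> {w. g w \<noteq> 0}"
  have S: "finite ?S"
    using assms by (simp add: FA_def)
  have "fa_ext phi (f + g) = (\<Sum>w\<in>?S. fa_smult ((f + g) w) (foldr fa_mult (map phi w) fa_one))"
    by (rule fa_ext_conv_sum[OF S]) auto
  also have "\<dots> = fa_ext phi f + fa_ext phi g"
    by (simp add: fa_ext_conv_sum[OF S] fa_smult_add_left sum.distrib)
  finally show ?thesis .
qed

lemma fa_ext_smult:
  assumes "f \<in> FA"
  shows "fa_ext phi (fa_smult c f) = fa_smult c (fa_ext phi f)"
proof -
  let ?S = "{w. f w \<noteq> 0}"
  have S: "finite ?S"
    using assms by (simp add: FA_def)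
  have "fa_ext phi (fa_smult c f)
      = (\<Sum>w\<in>?S. fa_smult (fa_smult c f w) (foldr fa_mult (map phi w) fa_one))"
    by (rule fa_ext_conv_sum[OF S]) (auto simp: fa_smult_def)
  also have "\<dots> = fa_smult c (fa_ext phi f)"
    by (simp add: fa_ext_conv_sum[OF S] fa_smult_sum_right fa_smult_assoc) (simp add: fa_smult_def)
  finally show ?thesis .
qed

lemma fa_ext_lincomb:
  assumes "\<And>x. x \<in> A \<Longrightarrow> f x \<in> FA"
  shows "fa_ext phi (\<Sum>x\<in>A. fa_smult (c x) (f x)) = (\<Sum>x\<in>A. fa_smult (c x) (fa_ext phi (f x)))"
  using assms
proof (induction A rule: infinite_finite_induct)
  case (insert x F)
  then show ?case
    by (simp add: fa_ext_add fa_ext_smult FA_smult FA_sum del: plus_fun_apply)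
qed (simp_all add: fa_ext_zero)

lemma fa_mult_one: "fa_mult f fa_one = f"
proof
  fix w
  have "fa_mult f fa_one w = (\<Sum>k\<le>length w. if k = length w then f w else 0)"
    unfolding fa_mult_def fa_one_def by (rule sum.cong) auto
  then show "fa_mult f fa_one w = f w"
    by simp
qed

lemma fa_ext_one: "fa_ext phi fa_one = fa_one"
proof -
  have "{w. fa_one w \<noteq> 0} = {[]}"
    by (auto simp: fa_one_def)
  then show ?thesis
    by (simp add: fa_ext_def) (simp add: fa_one_def)
qed

lemma fa_ext_gen: "fa_ext phi (fa_gen x) = phi x"
proof -
  have "{w. fa_gen x w \<noteq> 0} = {[x]}"
    by (auto simp: fa_gen_def)
  then show ?thesis
    by (simp add: fa_ext_def fa_mult_one) (simp add: fa_gen_def)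
qed

definition gen_poly :: "'n \<Rightarrow> 'n \<Rightarrow> complex poly \<Rightarrow> 'n fa" where
  "gen_poly i j P = (\<Sum>l\<le>degree P. fa_smult (coeff P l) (gen i j l))"

lemma gen_poly_0 [simp]: "gen_poly i j 0 = 0"
  by (simp add: gen_poly_def)

lemma gen_poly_conv_sum:
  "degree P \<le> N \<Longrightarrow> gen_poly i j P = (\<Sum>l\<le>N. fa_smult (coeff P l) (gen i j l))"
  unfolding gen_poly_def by (rule sum.mono_neutral_left) (auto simp: coeff_eq_0)

lemma gen_poly_add: "gen_poly i j (P + Q) = gen_poly i j P + gen_poly i j Q"
proof -
  let ?N = "max (degree P) (degree Q)"
  have "degree (P + Q) \<le> ?N"
    by (rule degree_add_le) auto
  then show ?thesis
    by (simp add: gen_poly_conv_sum[of _ ?N] fa_smult_add_left sum.distrib)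
qed

lemma gen_poly_smult: "gen_poly i j (smult c P) = fa_smult c (gen_poly i j P)"
  by (simp add: gen_poly_conv_sum[OF degree_smult_le] gen_poly_def fa_smult_sum_right fa_smult_assoc)

lemma gen_poly_lincomb:
  "gen_poly i j (\<Sum>m\<in>A. smult (c m) (P m)) = (\<Sum>m\<in>A. fa_smult (c m) (gen_poly i j (P m)))"
  by (induction A rule: infinite_finite_induct) (simp_all add: gen_poly_add gen_poly_smult)

lemma gen_poly_x_power: "gen_poly i j ([:0, 1:] ^ r) = gen i j r"
proof -
  have "[:0, 1:] ^ r = (monom 1 r :: complex poly)"
    by (simp add: monom_altdef)
  then have "gen_poly i j ([:0, 1:] ^ r) = (\<Sum>l\<le>r. fa_smult (coeff (monom 1 r) l) (gen i j l))"
    by (simp add: gen_poly_def degree_monom_eq)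
  also have "\<dots> = (\<Sum>l\<le>r. if l = r then gen i j l else 0)"
    by (intro sum.cong) (auto simp: coeff_monom)
  finally show ?thesis
    by simp
qed

lemma W_map_gen: "W_map a b (gen i j r) = gen_poly i j (opoly a b r)"
proof (cases r)
  case 0
  then show ?thesis
    by (simp add: W_map_def gen_def gen_poly_def fa_ext_one fa_ext_zero)
next
  case (Suc k)
  have "W_map a b (gen i j r) = W_gen a b (i, j, k)"
    using Suc by (simp add: W_map_def gen_def fa_ext_gen)
  also have "\<dots> = fa_smult (coeff (opoly a b r) r) (gen i j r)
      + (\<Sum>l<r. fa_smult (coeff (opoly a b r) l) (gen i j l))"
    using Suc by (simp add: W_gen_def coeff_opoly_self)
  also have "\<dots> = gen_poly i j (opoly a b r)"
    using Suc by (simp add: gen_poly_conv_sum[OF degree_opoly_le] lessThan_Suc_atMost add.commute)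
  finally show ?thesis .
qed

lemma W_map_inverse_expansion:
  assumes "[:0, 1:] ^ r = (\<Sum>l\<le>r. smult (q l) (opoly a b l))"
  shows "W_map a b (\<Sum>m\<le>r. fa_smult (q m) (gen i j m)) = gen i j r"
proof -
  have "W_map a b (\<Sum>m\<le>r. fa_smult (q m) (gen i j m))
      = (\<Sum>m\<le>r. fa_smult (q m) (W_map a b (gen i j m)))"
    unfolding W_map_def by (rule fa_ext_lincomb[OF FA_gen])
  also have "\<dots> = (\<Sum>m\<le>r. fa_smult (q m) (gen_poly i j (opoly a b m)))"
    by (simp only: W_map_gen)
  also have "\<dots> = gen_poly i j ([:0, 1:] ^ r)"
    by (simp add: assms gen_poly_lincomb)
  finally show ?thesis
    by (simp add: gen_poly_x_power)
qed

lemma oint_coeff_Kinv_coeff: "oint_coeff (Kinv_coeff q) T r = (\<Sum>m\<le>r. fa_smult (q r m) (T m))"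
  unfolding oint_coeff_def
  by (rule sum.mono_neutral_cong_left) (auto simp: Kinv_coeff_def split: if_splits)

theorem mainTheorem2:
  fixes a b :: "nat \<Rightarrow> complex"
    and q :: "nat \<Rightarrow> nat \<Rightarrow> complex"
    and Winv :: "'n::finite fa \<Rightarrow> 'n fa"
  assumes b0: "b 0 = 0"
    and bnz: "\<And>m. m \<ge> 1 \<Longrightarrow> b m \<noteq> 0"
    and q_def: "\<And>r. [:0, 1:] ^ r = (\<Sum>l\<le>r. smult (q r l) (opoly a b l))"
    and W_wd: "\<And>x y :: 'n fa. x \<in> FA \<Longrightarrow> y \<in> FA \<Longrightarrow> fa_cong (OY_rels a b) x y \<Longrightarrow>
                  fa_cong yangian_rels (W_map a b x) (W_map a b y)"
    and Winv_FA: "\<And>y. y \<in> FA \<Longrightarrow> Winv y \<in> FA"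
    and Winv_wd: "\<And>y y'. y \<in> FA \<Longrightarrow> y' \<in> FA \<Longrightarrow> fa_cong yangian_rels y y' \<Longrightarrow>
                  fa_cong (OY_rels a b) (Winv y) (Winv y')"
    and Winv_left: "\<And>x. x \<in> FA \<Longrightarrow> fa_cong (OY_rels a b) (Winv (W_map a b x)) x"
    and Winv_right: "\<And>y. y \<in> FA \<Longrightarrow> fa_cong yangian_rels (W_map a b (Winv y)) y"
  shows "(\<forall>i j r. r \<ge> 1 \<longrightarrow>
            fa_cong (OY_rels a b) (Winv (gen i j r))
              (gen i j r + (\<Sum>l<r. fa_smult (q r l) (gen i j l))))
       \<and> (\<forall>i j r. fa_cong (OY_rels a b) (Winv (gen i j r))
              (oint_coeff (Kinv_coeff q) (gen i j) r))"
proof -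
  define X :: "'n \<Rightarrow> 'n \<Rightarrow> nat \<Rightarrow> 'n fa"
    where "X i j r = (\<Sum>m\<le>r. fa_smult (q r m) (gen i j m))" for i j r
  have Winv_gen: "fa_cong (OY_rels a b) (Winv (gen i j r)) (X i j r)" for i j r
  proof -
    have "X i j r \<in> FA"
      unfolding X_def by (intro FA_sum FA_smult FA_gen)
    moreover have "W_map a b (X i j r) = gen i j r"
      unfolding X_def by (rule W_map_inverse_expansion[OF q_def])
    ultimately show ?thesis
      using Winv_left by metis
  qed
  have "q r r = 1" for r
    by (rule monic_expansion_leading_coeff[OF degree_opoly_le coeff_opoly_self q_def])
  then have "X i j r = gen i j r + (\<Sum>l<r. fa_smult (q r l) (gen i j l))" for i j r
    by (cases r) (simp_all add: X_def lessThan_Suc_atMost add.commute)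
  with Winv_gen show ?thesis
    by (simp add: X_def oint_coeff_Kinv_coeff)
qed

end
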